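(* Let $X$ be a metric space with integer valued metric. Then for every $f\in\mathrm{E}(X)$ and every integer $m\ge1$ there exists a function $f'\in\mathrm{E}'(X)$ with values in $\frac1m\mathbb{Z}$ such that $\|f-f'\|_\infty\le\frac1{2m}$.
   Context: $\Delta(X)=\{f\in\mathbb R^X: f(x)+f(y)\ge d(x,y)\ \forall x,y\in X\}$ with the pointwise order; $\mathrm{E}(X)$ is its set of minimal elements. For $f\colon X\to\mathbb R$, $A(f)$ is the set of unordered pairs $\{x,y\}$ ($x=y$ allowed) with $f(x)+f(y)=d(x,y)$, and $\mathrm{E}'(X)=\{f\in\Delta(X):\bigcup A(f)=X\}$ (a subset of $\mathrm{E}(X)$). $\|f-g\|_\infty=\sup_x|f(x)-g(x)|$. *)

theory Defs
  imports Complex_Main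
begin

definition metric_on :: "'a set \<Rightarrow> ('a \<Rightarrow> 'a \<Rightarrow> real) \<Rightarrow> bool" where
  "metric_on X d \<longleftrightarrow>
     (\<forall>x\<in>X. \<forall>y\<in>X. d x y = 0 \<longleftrightarrow> x = y) \<and>
     (\<forall>x\<in>X. \<forall>y\<in>X. d x y = d y x) \<and>
     (\<forall>x\<in>X. \<forall>y\<in>X. \<forall>z\<in>X. d x z \<le> d x y + d y z)"

definition integer_valued :: "'a set \<Rightarrow> ('a \<Rightarrow> 'a \<Rightarrow> real) \<Rightarrow> bool" where
  "integer_valued X d \<longleftrightarrow> (\<forall>x\<in>X. \<forall>y\<in>X. d x y \<in> \<int>)"

definition Delta :: "'a set \<Rightarrow> ('a \<Rightarrow> 'a \<Rightarrow> real) \<Rightarrow> ('a \<Rightarrow> real) set" where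
  "Delta X d = {f. \<forall>x\<in>X. \<forall>y\<in>X. f x + f y \<ge> d x y}"

definition E_set :: "'a set \<Rightarrow> ('a \<Rightarrow> 'a \<Rightarrow> real) \<Rightarrow> ('a \<Rightarrow> real) set" where
  "E_set X d = {f \<in> Delta X d. \<forall>g \<in> Delta X d.
      (\<forall>x\<in>X. g x \<le> f x) \<longrightarrow> (\<forall>x\<in>X. g x = f x)}"

definition Apairs :: "'a set \<Rightarrow> ('a \<Rightarrow> 'a \<Rightarrow> real) \<Rightarrow> ('a \<Rightarrow> real) \<Rightarrow> 'a set set" where
  "Apairs X d f = {{x, y} | x y. x \<in> X \<and> y \<in> X \<and> f x + f y = d x y}"

definition E_set' :: "'a set \<Rightarrow> ('a \<Rightarrow> 'a \<Rightarrow> real) \<Rightarrow> ('a \<Rightarrow> real) set" where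
  "E_set' X d = {f \<in> Delta X d. \<Union> (Apairs X d f) = X}"

end

theory Submission
  imports Defs
begin

text \<open>Scaling d and f by m reduces the claim to m = 1, where f is rounded to a nearest integer.
  Rounding the ties (half-integer values) of f up keeps f x + f y \<ge> d x y; rounding two ties down
  loses 1, which is harmless unless the pair is tight, because f x + f y is then an integer.
  So ties are rounded down exactly on a maximal set L of ties containing no tight pair.
  A point rounded with error < 1/2 stays tight: minimality of f gives an almost tight partner y,
  and the rounded sum is an integer in [d x y, d x y + 1). A tie outside L, rounded up, has by
  maximality a tight partner in L, rounded down.\<close>

lemma Delta_scale:
  assumes "c > 0"
  shows "(\<lambda>x. c * f x) \<in> Delta X (\<lambda>x y. c * d x y) \<longleftrightarrow> f \<in> Delta X d"
  using assms by (simp add: Delta_def flip: distrib_left)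

lemma E_set_scale:
  assumes c: "c > 0" and f: "f \<in> E_set X d"
  shows "(\<lambda>x. c * f x) \<in> E_set X (\<lambda>x y. c * d x y)"
  unfolding E_set_def
proof (intro CollectI conjI ballI impI)
  show "(\<lambda>x. c * f x) \<in> Delta X (\<lambda>x y. c * d x y)"
    using f c by (simp add: E_set_def Delta_scale)
next
  fix g x
  assume g: "g \<in> Delta X (\<lambda>x y. c * d x y)" and below: "\<forall>x\<in>X. g x \<le> c * f x" and x: "x \<in> X"
  have "(\<lambda>x. c * (g x / c)) = g" using c by simp
  then have "(\<lambda>x. g x / c) \<in> Delta X d" using g Delta_scale[OF c, of "\<lambda>x. g x / c"] by simp
  moreover have "\<forall>x\<in>X. g x / c \<le> f x" using below c by (simp add: divide_le_eq mult.commute)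
  ultimately have "g x / c = f x" using f x unfolding E_set_def by (auto dest!: bspec[of _ _ "\<lambda>x. g x / c"])
  then show "g x = c * f x" using c by (simp add: divide_eq_eq mult.commute)
qed

lemma E_set'_scale:
  assumes c: "c > 0"
  shows "(\<lambda>x. c * f x) \<in> E_set' X (\<lambda>x y. c * d x y) \<longleftrightarrow> f \<in> E_set' X d"
proof -
  have "Apairs X (\<lambda>x y. c * d x y) (\<lambda>x. c * f x) = Apairs X d f"
    using c by (simp add: Apairs_def flip: distrib_left)
  then show ?thesis by (simp add: E_set'_def Delta_scale[OF c])
qed

lemma integer_valued_scale:
  assumes "integer_valued X d"
  shows "integer_valued X (\<lambda>x y. of_int m * d x y)"
  using assms by (simp add: integer_valued_def)

lemma integer_valuedE:
  assumes "integer_valued X d" "x \<in> X" "y \<in> X"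
  obtains n where "d x y = of_int n"
  using assms unfolding integer_valued_def by (meson Ints_cases)

lemma E_set'I:
  assumes "g \<in> Delta X d" and "\<And>x. x \<in> X \<Longrightarrow> \<exists>y\<in>X. g x + g y = d x y"
  shows "g \<in> E_set' X d"
  unfolding E_set'_def
proof (intro CollectI conjI equalityI subsetI)
  fix x assume "x \<in> \<Union> (Apairs X d g)"
  then show "x \<in> X" by (auto simp: Apairs_def)
next
  fix x assume x: "x \<in> X"
  then obtain y where "y \<in> X" "g x + g y = d x y" using assms(2) by blast
  then have "{x, y} \<in> Apairs X d g" using x unfolding Apairs_def by blast
  then show "x \<in> \<Union> (Apairs X d g)" by blast
qed (rule assms(1))

lemma E_set_almost_tight:
  assumes sym: "\<And>x y. x \<in> X \<Longrightarrow> y \<in> X \<Longrightarrow> d x y = d y x"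
    and f: "f \<in> E_set X d" and x0: "x0 \<in> X" and e: "e > 0"
  shows "\<exists>y\<in>X. f x0 + f y < d x0 y + e"
proof (rule ccontr)
  assume "\<not> ?thesis"
  then have far: "d x0 y + e \<le> f x0 + f y" if "y \<in> X" for y
    using that by (auto simp: not_less)
  define g where "g = f(x0 := f x0 - e/2)"
  have "g \<in> Delta X d"
    unfolding Delta_def
  proof (intro CollectI ballI)
    fix x y assume xy: "x \<in> X" "y \<in> X"
    have loss: "f x + f y - e \<le> g x + g y" using e by (simp add: g_def)
    consider "x = x0" | "y = x0" | "x \<noteq> x0" "y \<noteq> x0" by blast
    then show "d x y \<le> g x + g y"
    proof cases
      case 1 then show ?thesis using far[OF xy(2)] loss by simp
    next
      case 2 then show ?thesis using far[OF xy(1)] loss sym[OF xy] by simp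
    next
      case 3 then show ?thesis using f xy by (simp add: g_def E_set_def Delta_def)
    qed
  qed
  moreover have "\<forall>x\<in>X. g x \<le> f x" using e by (simp add: g_def)
  ultimately have "g x0 = f x0" using f x0 unfolding E_set_def by blast
  then show False using e by (simp add: g_def)
qed

lemma exists_maximal_independent_subset:
  fixes R :: "'a \<Rightarrow> 'a \<Rightarrow> bool"
  shows "\<exists>L\<subseteq>H. (\<forall>x\<in>L. \<forall>y\<in>L. \<not> R x y) \<and> (\<forall>x\<in>H - L. \<exists>y\<in>insert x L. R x y \<or> R y x)"
proof -
  define A where "A = {I. I \<subseteq> H \<and> (\<forall>x\<in>I. \<forall>y\<in>I. \<not> R x y)}"
  have "\<exists>L\<in>A. \<forall>I\<in>A. L \<subseteq> I \<longrightarrow> I = L"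
  proof (rule Zorn_Lemma, rule ballI)
    fix C assume C: "C \<in> chains A"
    show "\<Union>C \<in> A" unfolding A_def
    proof safe
      fix x I assume "x \<in> I" "I \<in> C"
      then show "x \<in> H" using chainsD2[OF C] by (auto simp: A_def)
    next
      fix x y I J assume "x \<in> I" "I \<in> C" "y \<in> J" "J \<in> C" "R x y"
      then show False using chainsD[OF C \<open>I \<in> C\<close> \<open>J \<in> C\<close>] chainsD2[OF C] unfolding A_def by blast
    qed
  qed
  then obtain L where L: "L \<in> A" and maximal: "\<forall>I\<in>A. L \<subseteq> I \<longrightarrow> I = L" by blast
  have "\<exists>y\<in>insert x L. R x y \<or> R y x" if x: "x \<in> H - L" for x
  proof -
    have "insert x L \<notin> A" using maximal x by blast
    moreover have "insert x L \<subseteq> H" using L x by (simp add: A_def)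
    ultimately obtain a b where "a \<in> insert x L" "b \<in> insert x L" "R a b"
      unfolding A_def by blast
    then show ?thesis using L unfolding A_def by blast
  qed
  then show ?thesis using L unfolding A_def by blast
qed

definition round_ties_down_on :: "'a set \<Rightarrow> ('a \<Rightarrow> real) \<Rightarrow> 'a \<Rightarrow> int" where
  "round_ties_down_on L f x = (if x \<in> L then \<lceil>f x - 1/2\<rceil> else \<lfloor>f x + 1/2\<rfloor>)"

lemma round_ties_down_on_error:
  fixes f :: "'a \<Rightarrow> real"
  shows "-1/2 \<le> round_ties_down_on L f x - f x" "round_ties_down_on L f x - f x \<le> 1/2"
  by (cases "x \<in> L"; simp add: round_ties_down_on_def; linarith)+

lemma round_ties_down_on_error_gt:
  fixes f :: "'a \<Rightarrow> real"
  shows "x \<notin> L \<Longrightarrow> -1/2 < round_ties_down_on L f x - f x"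
  unfolding round_ties_down_on_def by simp linarith

lemma round_ties_down_on_error_lt:
  fixes f :: "'a \<Rightarrow> real"
  assumes "x \<in> L \<or> f x + 1/2 \<notin> \<int>"
  shows "round_ties_down_on L f x - f x < 1/2"
proof (cases "x \<in> L")
  case False
  then have "f x + 1/2 \<noteq> of_int \<lfloor>f x + 1/2\<rfloor>" using assms by (metis Ints_of_int)
  then show ?thesis using False unfolding round_ties_down_on_def by simp linarith
qed (simp add: round_ties_down_on_def; linarith)

lemma round_ties_down_on_tie:
  fixes f :: "'a \<Rightarrow> real"
  assumes "f x + 1/2 \<in> \<int>"
  shows "round_ties_down_on L f x - f x = (if x \<in> L then -1/2 else 1/2)"
proof -
  obtain n where n: "f x + 1/2 = of_int n" using assms by (auto elim: Ints_cases)
  then have "f x - 1/2 = of_int (n - 1)" by simp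
  then show ?thesis using n unfolding round_ties_down_on_def by (simp only: ceiling_of_int floor_of_int) simp
qed

lemma round_ties_down_on_Delta:
  assumes int: "integer_valued X d" and f: "f \<in> Delta X d"
    and ties: "\<And>x. x \<in> L \<Longrightarrow> f x + 1/2 \<in> \<int>"
    and indep: "\<And>x y. x \<in> L \<Longrightarrow> y \<in> L \<Longrightarrow> f x + f y \<noteq> d x y"
  shows "(\<lambda>x. real_of_int (round_ties_down_on L f x)) \<in> Delta X d"
  unfolding Delta_def
proof (intro CollectI ballI)
  fix x y assume xy: "x \<in> X" "y \<in> X"
  let ?r = "round_ties_down_on L f"
  obtain n where n: "d x y = of_int n" using integer_valuedE[OF int xy] .
  have "d x y \<le> f x + f y" using f xy by (simp add: Delta_def)
  then have above: "of_int n \<le> f x + f y" using n by simp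
  show "d x y \<le> of_int (?r x) + of_int (?r y)"
  proof (cases "x \<in> L \<and> y \<in> L")
    case True
    then have "f x + 1/2 \<in> \<int>" "f y + 1/2 \<in> \<int>" using ties by auto
    then have "(f x + 1/2) + (f y + 1/2) - 1 \<in> \<int>" by (metis Ints_1 Ints_add Ints_diff)
    moreover have "(f x + 1/2) + (f y + 1/2) - 1 = f x + f y" by simp
    ultimately obtain k where k: "f x + f y = of_int k" by (metis Ints_cases)
    have "k \<noteq> n" using indep[of x y] True k n by auto
    then have "n + 1 \<le> k" using above k by simp
    moreover have "?r x + ?r y = k - 1"
      using round_ties_down_on_tie[of f x L] round_ties_down_on_tie[of f y L] True ties k by auto
    ultimately show ?thesis using n by simp
  next
    case False
    then have "-1 < (?r x - f x) + (?r y - f y)"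
      using round_ties_down_on_error_gt[of x L f] round_ties_down_on_error_gt[of y L f]
        round_ties_down_on_error[of L f x] round_ties_down_on_error[of L f y] by auto
    then have "n \<le> ?r x + ?r y" using above by linarith
    then show ?thesis using n by simp
  qed
qed

lemma round_ties_down_on_tight:
  assumes sym: "\<And>x y. x \<in> X \<Longrightarrow> y \<in> X \<Longrightarrow> d x y = d y x"
    and int: "integer_valued X d" and f: "f \<in> E_set X d"
    and LX: "L \<subseteq> X" and ties: "\<And>x. x \<in> L \<Longrightarrow> f x + 1/2 \<in> \<int>"
    and indep: "\<And>x y. x \<in> L \<Longrightarrow> y \<in> L \<Longrightarrow> f x + f y \<noteq> d x y"
    and partner: "\<And>x. x \<in> X \<Longrightarrow> x \<notin> L \<Longrightarrow> f x + 1/2 \<in> \<int> \<Longrightarrow> \<exists>y\<in>L. f x + f y = d x y"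
    and x: "x \<in> X"
  shows "\<exists>y\<in>X. real_of_int (round_ties_down_on L f x) + round_ties_down_on L f y = d x y"
proof -
  let ?r = "round_ties_down_on L f"
  have D: "(\<lambda>x. real_of_int (?r x)) \<in> Delta X d"
    using round_ties_down_on_Delta[OF int _ ties indep] f by (simp add: E_set_def)
  show ?thesis
  proof (cases "x \<notin> L \<and> f x + 1/2 \<in> \<int>")
    case True
    then obtain y where y: "y \<in> L" "f x + f y = d x y" using partner x by blast
    have "?r x - f x = 1/2" "?r y - f y = -1/2"
      using round_ties_down_on_tie[of f x L] round_ties_down_on_tie[of f y L] True y ties by auto
    then show ?thesis using y LX by (intro bexI[of _ y]) auto
  next
    case False
    then have "?r x - f x < 1/2" by (intro round_ties_down_on_error_lt) auto
    then obtain y where y: "y \<in> X" "f x + f y < d x y + (1/2 - (?r x - f x))"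
      using E_set_almost_tight[OF sym f x] by (metis diff_gt_0_iff_gt)
    obtain n where n: "d x y = of_int n" using integer_valuedE[OF int x y(1)] .
    have "?r x + ?r y < n + 1"
      using y n round_ties_down_on_error(2)[of L f y] by linarith
    moreover have "d x y \<le> ?r x + ?r y" using D x y(1) by (simp add: Delta_def)
    then have "n \<le> ?r x + ?r y" using n by (metis of_int_add of_int_le_iff)
    ultimately show ?thesis using y n by (intro bexI[of _ y]) simp_all
  qed
qed

lemma E_set_integer_approximation:
  assumes sym: "\<And>x y. x \<in> X \<Longrightarrow> y \<in> X \<Longrightarrow> d x y = d y x"
    and diag: "\<And>x. x \<in> X \<Longrightarrow> d x x = 0"
    and int: "integer_valued X d" and f: "f \<in> E_set X d"
  shows "\<exists>g\<in>E_set' X d. (\<forall>x\<in>X. g x \<in> \<int>) \<and> (\<forall>x\<in>X. \<bar>f x - g x\<bar> \<le> 1/2)"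
proof -
  define H where "H = {x\<in>X. f x + 1/2 \<in> \<int>}"
  obtain L where L: "L \<subseteq> H" and indep: "\<forall>x\<in>L. \<forall>y\<in>L. f x + f y \<noteq> d x y"
    and maximal: "\<forall>x\<in>H - L. \<exists>y\<in>insert x L. f x + f y = d x y \<or> f y + f x = d y x"
    using exists_maximal_independent_subset[of H "\<lambda>x y. f x + f y = d x y"] by blast
  have LX: "L \<subseteq> X" and ties: "\<And>x. x \<in> L \<Longrightarrow> f x + 1/2 \<in> \<int>"
    using L by (auto simp: H_def)
  have partner: "\<exists>y\<in>L. f x + f y = d x y" if x: "x \<in> X" "x \<notin> L" "f x + 1/2 \<in> \<int>" for x
  proof -
    have "x \<in> H - L" using x by (simp add: H_def)
    then obtain y where y: "y \<in> insert x L" "f x + f y = d x y \<or> f y + f x = d y x"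
      using maximal by blast
    have "y \<in> X" using y x LX by auto
    then have tight: "f x + f y = d x y" using y sym[OF x(1)] by (auto simp: add.commute)
    have "y \<noteq> x"
    proof
      assume "y = x"
      then have "f x = 0" using tight diag[OF x(1)] by simp
      then obtain n :: int where "1/2 = (of_int n :: real)" using x(3) by (auto elim: Ints_cases)
      then have "2 * n = 1" by (simp flip: of_int_eq_1_iff)
      then show False by presburger
    qed
    then show ?thesis using y tight by auto
  qed
  define g where "g x = real_of_int (round_ties_down_on L f x)" for x
  have "g \<in> E_set' X d"
  proof (rule E_set'I)
    show "g \<in> Delta X d"
      unfolding g_def using round_ties_down_on_Delta[OF int _ ties] f indep by (simp add: E_set_def)
    show "\<exists>y\<in>X. g x + g y = d x y" if "x \<in> X" for x
      unfolding g_def using round_ties_down_on_tight[OF sym int f LX ties _ partner that] indep by simp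
  qed
  moreover have "\<bar>f x - g x\<bar> \<le> 1/2" for x
    using round_ties_down_on_error[of L f x] unfolding g_def abs_le_iff by linarith
  ultimately show ?thesis by (intro bexI[of _ g]) (auto simp: g_def)
qed

theorem proposition4p4:
  fixes X :: "'a set" and d :: "'a \<Rightarrow> 'a \<Rightarrow> real"
    and f :: "'a \<Rightarrow> real" and m :: int
  assumes "metric_on X d" and "integer_valued X d"
    and "f \<in> E_set X d" and "m \<ge> 1"
  shows "\<exists>f' \<in> E_set' X d. (\<forall>x\<in>X. of_int m * f' x \<in> \<int>) \<and>
           (\<forall>x\<in>X. \<bar>f x - f' x\<bar> \<le> 1 / (2 * of_int m))"
proof -
  define M where "M = real_of_int m"
  have M: "M > 0" using assms(4) by (simp add: M_def)
  obtain g where g: "g \<in> E_set' X (\<lambda>x y. M * d x y)" "\<forall>x\<in>X. g x \<in> \<int>"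
      "\<forall>x\<in>X. \<bar>M * f x - g x\<bar> \<le> 1/2"
    using E_set_integer_approximation[of X "\<lambda>x y. M * d x y" "\<lambda>x. M * f x"]
      assms(1) E_set_scale[OF M assms(3)] integer_valued_scale[OF assms(2), of m]
    unfolding metric_on_def M_def by auto
  have "(\<lambda>x. M * (g x / M)) = g" using M by simp
  then have "(\<lambda>x. g x / M) \<in> E_set' X d" using g(1) E_set'_scale[OF M, of "\<lambda>x. g x / M"] by simp
  moreover have "\<bar>f x - g x / M\<bar> \<le> 1 / (2 * M)" if "x \<in> X" for x
  proof -
    have "\<bar>f x - g x / M\<bar> = \<bar>M * f x - g x\<bar> / M" using M by (simp add: field_simps)
    also have "\<dots> \<le> (1/2) / M" using g(3) that M by (intro divide_right_mono) auto
    finally show ?thesis by simp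
  qed
  moreover have "\<forall>x\<in>X. of_int m * (g x / M) \<in> \<int>" using g(2) M by (simp add: M_def)
  ultimately show ?thesis unfolding M_def by (intro bexI[of _ "\<lambda>x. g x / of_int m"]) auto
qed

end
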